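(* Let $p$ be an odd prime, let $q\in\mathbb{C}_p$ with $|q-1|_p<p^{-1/(p-1)}$, let $n\ge 0$ be an integer and let $x\in\mathbb{Z}_p$. Then the limit $$K_{n,q}(x):=\int_{\mathbb{Z}_p}[x+y]_q^n\,d\mu_{-q}(y)=\lim_{N\to\infty}\frac{1}{[p^N]_{-q}}\sum_{y=0}^{p^N-1}[x+y]_q^n(-q)^y$$ exists and $$K_{n,q}(x)=[2]_q\left(\frac{1}{1-q}\right)^n\sum_{k=0}^n\binom nk(-1)^k q^{xk}\frac{1}{1+q^{k+1}}.$$ In particular, $K_{n,q}:=K_{n,q}(0)=\int_{\mathbb{Z}_p}[x]_q^n\,d\mu_{-q}(x)=[2]_q\left(\frac{1}{1-q}\right)^n\sum_{l=0}^n\binom nl(-1)^l\frac{1}{1+q^{l+1}}$.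
   Context: $\mathbb{C}_p$ is the $p$-adic completion of an algebraic closure of $\mathbb{Q}_p$, with $|p|_p=1/p$. For $q\in\mathbb{C}_p$ with $|q-1|_p<p^{-1/(p-1)}$ one sets $q^x=\exp(x\log q)$ for $|x|_p\le 1$, and $[x]_q=\frac{1-q^x}{1-q}$. For an integer $M\ge 0$, $[M]_{-q}=\frac{1-(-q)^M}{1+q}$. The ($q$-Volkenborn, "fermionic") integral with respect to $\mu_{-q}$ of a function $g$ on $\mathbb{Z}_p$ is defined by $\int_{\mathbb{Z}_p}g(y)\,d\mu_{-q}(y)=\lim_{N\to\infty}\frac{1}{[p^N]_{-q}}\sum_{y=0}^{p^N-1}g(y)(-q)^y$. *)

theory Defs
  imports "HOL-Computational_Algebra.Computational_Algebra"
begin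

text \<open>We do not construct C_p; instead we work in an arbitrary field K of characteristic 0
with an absolute value av satisfying the axioms characterizing C_p up to isometric
isomorphism: non-archimedean, restricting to the p-adic absolute value on the integers
(hence on Q), complete, algebraically closed, and with the elements algebraic over Q dense.\<close>

definition av_lim :: "('a::ab_group_add \<Rightarrow> real) \<Rightarrow> (nat \<Rightarrow> 'a) \<Rightarrow> 'a \<Rightarrow> bool" where
  "av_lim av f L \<longleftrightarrow> (\<lambda>N. av (f N - L)) \<longlonglongrightarrow> 0"

definition is_Cp :: "nat \<Rightarrow> ('a::field_char_0 \<Rightarrow> real) \<Rightarrow> bool" where
  "is_Cp p av \<longleftrightarrow>
     (\<forall>x. av x \<ge> 0) \<and> (\<forall>x. av x = 0 \<longleftrightarrow> x = 0) \<and>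
     (\<forall>x y. av (x * y) = av x * av y) \<and>
     (\<forall>x y. av (x + y) \<le> max (av x) (av y)) \<and>
     (\<forall>m::int. m \<noteq> 0 \<longrightarrow> av (of_int m) = real p powr (- real (multiplicity (int p) m))) \<and>
     (\<forall>f::nat \<Rightarrow> 'a. (\<forall>e>0. \<exists>M. \<forall>m\<ge>M. \<forall>n\<ge>M. av (f m - f n) < e) \<longrightarrow> (\<exists>L. av_lim av f L)) \<and>
     (\<forall>P::'a poly. degree P > 0 \<longrightarrow> (\<exists>z. poly P z = 0)) \<and>
     (\<forall>x. \<forall>e>0. \<exists>z. algebraic z \<and> av (x - z) < e)"

definition Zp :: "('a::field_char_0 \<Rightarrow> real) \<Rightarrow> 'a set" where
  "Zp av = {x. \<exists>s::nat \<Rightarrow> int. av_lim av (\<lambda>N. of_int (s N)) x}"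

definition av_suminf :: "('a::field_char_0 \<Rightarrow> real) \<Rightarrow> (nat \<Rightarrow> 'a) \<Rightarrow> 'a" where
  "av_suminf av f = (THE s. av_lim av (\<lambda>N. \<Sum>k<N. f k) s)"

definition p_exp :: "('a::field_char_0 \<Rightarrow> real) \<Rightarrow> 'a \<Rightarrow> 'a" where
  "p_exp av z = av_suminf av (\<lambda>k. z ^ k / of_nat (fact k))"

definition p_log :: "('a::field_char_0 \<Rightarrow> real) \<Rightarrow> 'a \<Rightarrow> 'a" where
  "p_log av q = av_suminf av (\<lambda>k. (-1) ^ k * (q - 1) ^ Suc k / of_nat (Suc k))"

definition qpow :: "('a::field_char_0 \<Rightarrow> real) \<Rightarrow> 'a \<Rightarrow> 'a \<Rightarrow> 'a" where
  "qpow av q x = p_exp av (x * p_log av q)"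

definition qint :: "('a::field_char_0 \<Rightarrow> real) \<Rightarrow> 'a \<Rightarrow> 'a \<Rightarrow> 'a" where
  "qint av q x = (1 - qpow av q x) / (1 - q)"

definition qint_neg :: "'a::field_char_0 \<Rightarrow> nat \<Rightarrow> 'a" where
  "qint_neg q M = (1 - (-q) ^ M) / (1 + q)"

definition ferm_sum :: "nat \<Rightarrow> 'a::field_char_0 \<Rightarrow> ('a \<Rightarrow> 'a) \<Rightarrow> nat \<Rightarrow> 'a" where
  "ferm_sum p q g N = (1 / qint_neg q (p ^ N)) * (\<Sum>y<p ^ N. g (of_nat y) * (-q) ^ y)"

end

theory Submission
  imports Defs
begin

(*
  Write q^x = exp(x log q) with the p-adic series.  Legendre's formula gives |1/k!| <= p^(k/(p-1)),
  so exp converges on the disc |z| < p^(-1/(p-1)), and |log q| <= |q - 1| keeps log q inside it.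
  Summing the double series exp(log q) = sum_k (sum_m (ln^k)_m (q-1)^m) / k! by columns instead,
  the formal identity exp(ln(1 + X)) = 1 + X yields exp(log q) = q.  Hence q^(x+y) = q^x q^y and
  (q^x)^k = q^(xk) for natural y, k and |x| <= 1, so the binomial expansion of [x+y]_q^n turns the
  Riemann sum into a combination of geometric sums: as p^N is odd,
    sum_(y<p^N) (-q^(k+1))^y = (1 + q^((k+1) p^N)) / (1 + q^(k+1)),
  and 1/[p^N]_(-q) = (1 + q) / (1 + q^(p^N)).  The denominators do not vanish because
  |q^k - 1| < 1 = |2| for odd p, and q^(p^N) -> 1 because |p^N log q| -> 0; letting q^(p^N) -> 1
  gives the formula, with [2]_q = 1 + q.
*)

section \<open>Ultrametric absolute values\<close>

locale ultrametric_abs =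
  fixes av :: "'a::field_char_0 \<Rightarrow> real"
  assumes av_nonneg: "0 \<le> av x"
    and av_eq_0_iff: "av x = 0 \<longleftrightarrow> x = 0"
    and av_mult: "av (x * y) = av x * av y"
    and av_add_le_max: "av (x + y) \<le> max (av x) (av y)"
begin

lemma av_0 [simp]: "av 0 = 0"
  by (simp add: av_eq_0_iff)

lemma av_pos: "x \<noteq> 0 \<Longrightarrow> 0 < av x"
  using av_nonneg[of x] av_eq_0_iff[of x] by linarith

lemma av_1 [simp]: "av 1 = 1"
  using av_mult[of 1 1] av_pos[of 1] by simp

lemma av_minus_1 [simp]: "av (- 1) = 1"
proof -
  have "av (- 1) * av (- 1) = 1"
    using av_mult[of "- 1" "- 1"] by simp
  then show ?thesis
    using av_nonneg[of "- 1"] by (metis abs_of_nonneg abs_square_eq_1 power2_eq_square)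
qed

lemma av_minus [simp]: "av (- x) = av x"
  using av_mult[of "- 1" x] by simp

lemma av_minus_commute: "av (x - y) = av (y - x)"
  using av_minus[of "x - y"] by simp

lemma av_add_le: "av (x + y) \<le> av x + av y"
  using av_add_le_max[of x y] av_nonneg[of x] av_nonneg[of y] by linarith

lemma av_diff_triangle: "av (x - z) \<le> av (x - y) + av (y - z)"
  using av_add_le[of "x - y" "y - z"] by simp

lemma av_add_less: "av x < c \<Longrightarrow> av y < c \<Longrightarrow> av (x + y) < c"
  using av_add_le_max[of x y] by simp

lemma av_power: "av (x ^ n) = av x ^ n"
  by (induction n) (simp_all add: av_mult)

lemma av_inverse: "av (inverse x) = inverse (av x)"
proof (cases "x = 0")
  case False
  then have "av x * av (inverse x) = 1"
    by (simp flip: av_mult)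
  then show ?thesis
    using av_pos[OF False] by (simp add: field_simps)
qed simp

lemma av_divide: "av (x / y) = av x / av y"
  by (simp add: divide_inverse av_mult av_inverse)

lemma av_sum_le:
  assumes "0 \<le> B" "\<And>i. i \<in> A \<Longrightarrow> av (f i) \<le> B"
  shows "av (sum f A) \<le> B"
  using assms
proof (induction A rule: infinite_finite_induct)
  case (insert a A)
  then show ?case
    using order_trans[OF av_add_le_max[of "f a" "sum f A"]] by simp
qed simp_all

lemma av_lim_by_bound:
  assumes "\<forall>\<^sub>F N in sequentially. av (f N - L) \<le> b N" and "b \<longlonglongrightarrow> 0"
  shows "av_lim av f L"
  unfolding av_lim_def
  by (rule tendsto_sandwich[OF _ assms(1) tendsto_const assms(2)]) (simp add: av_nonneg)

lemma av_lim_const: "av_lim av (\<lambda>N. c) c"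
  by (simp add: av_lim_def)

lemma av_lim_add:
  assumes "av_lim av f a" "av_lim av g b"
  shows "av_lim av (\<lambda>N. f N + g N) (a + b)"
proof (rule av_lim_by_bound)
  show "\<forall>\<^sub>F N in sequentially. av (f N + g N - (a + b)) \<le> av (f N - a) + av (g N - b)"
    using av_add_le[of "f _ - a" "g _ - b"] by (simp add: add_diff_add)
  show "(\<lambda>N. av (f N - a) + av (g N - b)) \<longlonglongrightarrow> 0"
    using tendsto_add[of _ 0 _ _ 0] assms unfolding av_lim_def by fastforce
qed

lemma av_lim_minus: "av_lim av f a \<Longrightarrow> av_lim av (\<lambda>N. - f N) (- a)"
  unfolding av_lim_def using av_minus_commute by simp

lemma av_lim_diff:
  "av_lim av f a \<Longrightarrow> av_lim av g b \<Longrightarrow> av_lim av (\<lambda>N. f N - g N) (a - b)"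
  using av_lim_add[OF _ av_lim_minus] by simp

lemma av_lim_mult:
  assumes "av_lim av f a" "av_lim av g b"
  shows "av_lim av (\<lambda>N. f N * g N) (a * b)"
proof (rule av_lim_by_bound)
  have "f N * g N - a * b = (f N - a) * (g N - b) + a * (g N - b) + b * (f N - a)" for N
    by (simp add: algebra_simps)
  then have "av (f N * g N - a * b) \<le>
      av (f N - a) * av (g N - b) + av a * av (g N - b) + av b * av (f N - a)" for N
    using av_add_le[of "(f N - a) * (g N - b) + a * (g N - b)" "b * (f N - a)"]
      av_add_le[of "(f N - a) * (g N - b)" "a * (g N - b)"] by (simp add: av_mult)
  then show "\<forall>\<^sub>F N in sequentially. av (f N * g N - a * b) \<le>
      av (f N - a) * av (g N - b) + av a * av (g N - b) + av b * av (f N - a)"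
    by simp
  have "(\<lambda>N. av (f N - a) * av (g N - b) + av a * av (g N - b) + av b * av (f N - a))
      \<longlonglongrightarrow> 0 * 0 + av a * 0 + av b * 0"
    using assms unfolding av_lim_def by (intro tendsto_intros)
  then show "(\<lambda>N. av (f N - a) * av (g N - b) + av a * av (g N - b) + av b * av (f N - a))
      \<longlonglongrightarrow> 0"
    by simp
qed

lemma av_lim_sum:
  "(\<And>i. i \<in> A \<Longrightarrow> av_lim av (f i) (a i)) \<Longrightarrow>
    av_lim av (\<lambda>N. \<Sum>i\<in>A. f i N) (\<Sum>i\<in>A. a i)"
  by (induction A rule: infinite_finite_induct) (simp_all add: av_lim_const av_lim_add)

lemma av_lim_power: "av_lim av f a \<Longrightarrow> av_lim av (\<lambda>N. f N ^ k) (a ^ k)"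
  by (induction k) (simp_all add: av_lim_const av_lim_mult)

lemma av_lim_inverse:
  assumes f: "av_lim av f a" and "a \<noteq> 0"
  shows "av_lim av (\<lambda>N. inverse (f N)) (inverse a)"
proof (rule av_lim_by_bound)
  have a: "0 < av a"
    using \<open>a \<noteq> 0\<close> by (rule av_pos)
  have "\<forall>\<^sub>F N in sequentially. av (f N - a) < av a / 2"
    using f a unfolding av_lim_def by (intro order_tendstoD(2)) auto
  then show "\<forall>\<^sub>F N in sequentially. av (inverse (f N) - inverse a) \<le> av (f N - a) * (2 / av a ^ 2)"
  proof eventually_elim
    case (elim N)
    have "av a \<le> av (a - f N) + av (f N)"
      using av_diff_triangle[of a 0 "f N"] by simp
    then have fN: "av a / 2 \<le> av (f N)"
      using elim av_minus_commute[of a "f N"] by linarith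
    then have "f N \<noteq> 0"
      using a by auto
    then have "av (inverse (f N) - inverse a) = av (f N - a) / (av (f N) * av a)"
      using \<open>a \<noteq> 0\<close> by (simp add: inverse_diff_inverse av_mult av_divide av_inverse
          av_minus_commute[of a] divide_inverse mult.commute)
    also have "\<dots> \<le> av (f N - a) / (av a / 2 * av a)"
      using fN a by (intro divide_left_mono mult_right_mono) (simp_all add: av_nonneg)
    finally show ?case
      by (simp add: power2_eq_square)
  qed
  show "(\<lambda>N. av (f N - a) * (2 / av a ^ 2)) \<longlonglongrightarrow> 0"
    using f unfolding av_lim_def by (rule tendsto_mult_left_zero)
qed

lemma av_lim_divide:
  "av_lim av f a \<Longrightarrow> av_lim av g b \<Longrightarrow> b \<noteq> 0 \<Longrightarrow>
    av_lim av (\<lambda>N. f N / g N) (a / b)"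
  using av_lim_mult[OF _ av_lim_inverse] by (simp add: divide_inverse)

lemma av_lim_unique:
  assumes "av_lim av f a" "av_lim av f b"
  shows "a = b"
proof -
  have "av (a - b) \<le> av (f N - a) + av (f N - b)" for N
    using av_diff_triangle[of a b "f N"] av_minus_commute[of a "f N"] by linarith
  moreover have "(\<lambda>N. av (f N - a) + av (f N - b)) \<longlonglongrightarrow> 0"
    using tendsto_add[of _ 0 _ _ 0] assms unfolding av_lim_def by fastforce
  ultimately have "av (a - b) \<le> 0"
    by (intro LIMSEQ_le[OF tendsto_const]) auto
  then show ?thesis
    using av_nonneg[of "a - b"] av_eq_0_iff[of "a - b"] by simp
qed

lemma av_lim_Suc: "av_lim av f a \<Longrightarrow> av_lim av (\<lambda>N. f (Suc N)) a"
  unfolding av_lim_def by (rule LIMSEQ_Suc)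

lemma av_lim_le:
  assumes "av_lim av f a" "\<And>N. av (f N) \<le> B"
  shows "av a \<le> B"
proof -
  have "av a \<le> av (f N - a) + B" for N
    using av_diff_triangle[of a 0 "f N"] av_minus_commute[of a "f N"] assms(2)[of N] by simp
  moreover have "(\<lambda>N. av (f N - a) + B) \<longlonglongrightarrow> 0 + B"
    using assms(1) unfolding av_lim_def by (intro tendsto_intros)
  ultimately show ?thesis
    by (intro LIMSEQ_le[OF tendsto_const, of _ "0 + B", simplified]) auto
qed

abbreviation av_sums :: "(nat \<Rightarrow> 'a) \<Rightarrow> 'a \<Rightarrow> bool" where
  "av_sums f s \<equiv> av_lim av (\<lambda>N. \<Sum>k<N. f k) s"

lemma av_suminf_eqI: "av_sums f s \<Longrightarrow> av_suminf av f = s"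
  unfolding av_suminf_def using av_lim_unique by blast

lemma av_sums_imp_lim_0: "av_sums f s \<Longrightarrow> av_lim av f 0"
  using av_lim_diff[OF av_lim_Suc] by fastforce

lemma av_sums_le:
  assumes "av_sums f s" "0 \<le> B" "\<And>k. av (f k) \<le> B"
  shows "av s \<le> B"
  using assms(1) by (rule av_lim_le) (use assms(2,3) in \<open>intro av_sum_le\<close>)

lemma av_sums_cmult:
  assumes "av_sums f s"
  shows "av_sums (\<lambda>k. c * f k) (c * s)"
  using av_lim_mult[OF av_lim_const[of c] assms] by (simp add: sum_distrib_left)

lemma av_sums_Suc_shift:
  assumes "av_sums f s"
  shows "av_sums (\<lambda>k. f (Suc k)) (s - f 0)"
  using av_lim_diff[OF av_lim_Suc[OF assms] av_lim_const[of "f 0"]]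
  by (simp add: sum.lessThan_Suc_shift del: sum.lessThan_Suc)

lemma av_sums_shift:
  assumes "av_sums f s"
  shows "av_sums (\<lambda>k. f (k + K)) (s - (\<Sum>k<K. f k))"
proof (induction K)
  case (Suc K)
  from av_sums_Suc_shift[OF Suc] show ?case
    by (simp add: algebra_simps)
qed (simp add: assms)

lemma av_sums_finite:
  assumes "\<And>k. M \<le> k \<Longrightarrow> f k = 0"
  shows "av_sums f (\<Sum>k<M. f k)"
proof (rule av_lim_by_bound[where b = "\<lambda>_. 0"])
  have "av ((\<Sum>k<N. f k) - (\<Sum>k<M. f k)) \<le> 0" if "M \<le> N" for N
  proof -
    have "(\<Sum>k<N. f k) = (\<Sum>k<M. f k)"
      using that by (intro sum.mono_neutral_right) (auto simp: assms)
    then show ?thesis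
      by simp
  qed
  then show "\<forall>\<^sub>F N in sequentially. av ((\<Sum>k<N. f k) - (\<Sum>k<M. f k)) \<le> 0"
    by (rule eventually_sequentiallyI)
qed simp

lemma av_lim_0_imp_bounded:
  assumes "av_lim av f 0"
  obtains M where "0 < M" "\<And>k. av (f k) \<le> M"
proof -
  have "Bseq (\<lambda>k. av (f k))"
    using assms unfolding av_lim_def by (simp add: convergent_imp_Bseq convergentI)
  then obtain M where "0 < M" "\<forall>k. norm (av (f k)) \<le> M"
    by (rule BseqE)
  then show ?thesis
    using that[of M] by (simp add: av_nonneg)
qed

lemma av_mult_small_off_triangle:
  assumes a: "av_lim av a 0" and b: "av_lim av b 0" and "0 < r"
  obtains K where "\<And>i j. K \<le> i + j \<Longrightarrow> av (a i * b j) \<le> r"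
proof -
  obtain Ma where Ma: "0 < Ma" "\<And>k. av (a k) \<le> Ma"
    using av_lim_0_imp_bounded[OF a] by blast
  obtain Mb where Mb: "0 < Mb" "\<And>k. av (b k) \<le> Mb"
    using av_lim_0_imp_bounded[OF b] by blast
  obtain K1 where K1: "\<And>k. K1 \<le> k \<Longrightarrow> av (a k) < r / Mb"
    using order_tendstoD(2)[OF a[unfolded av_lim_def], of "r / Mb"] \<open>0 < r\<close> Mb
    by (auto simp: eventually_sequentially)
  obtain K2 where K2: "\<And>k. K2 \<le> k \<Longrightarrow> av (b k) < r / Ma"
    using order_tendstoD(2)[OF b[unfolded av_lim_def], of "r / Ma"] \<open>0 < r\<close> Ma
    by (auto simp: eventually_sequentially)
  have "av (a i * b j) \<le> r" if "K1 + K2 \<le> i + j" for i j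
  proof -
    have "K1 \<le> i \<or> K2 \<le> j"
      using that by arith
    then show ?thesis
    proof
      assume "K1 \<le> i"
      then have "av (a i) * av (b j) \<le> r / Mb * Mb"
        using K1 Mb \<open>0 < r\<close> by (intro mult_mono) (auto intro: less_imp_le simp: av_nonneg)
      then show ?thesis
        using Mb(1) by (simp add: av_mult)
    next
      assume "K2 \<le> j"
      then have "av (a i) * av (b j) \<le> Ma * (r / Ma)"
        using K2 Ma \<open>0 < r\<close> by (intro mult_mono) (auto intro: less_imp_le simp: av_nonneg)
      then show ?thesis
        using Ma(1) by (simp add: av_mult)
    qed
  qed
  then show ?thesis
    using that by blast
qed

lemma av_lim_sum_off_triangle:
  assumes a: "av_lim av a 0" and b: "av_lim av b 0"
  shows "av_lim av (\<lambda>N. \<Sum>(i, j) \<in> {..<N} \<times> {..<N} - {(i, j). i + j < N}. a i * b j) 0"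
proof -
  let ?D = "\<lambda>N. \<Sum>(i, j) \<in> {..<N} \<times> {..<N} - {(i, j). i + j < N}. a i * b j"
  have "(\<lambda>N. av (?D N)) \<longlonglongrightarrow> 0"
  proof (rule LIMSEQ_I)
    fix r :: real
    assume "0 < r"
    then obtain K where K: "\<And>i j. K \<le> i + j \<Longrightarrow> av (a i * b j) \<le> r / 2"
      using av_mult_small_off_triangle[OF a b, of "r / 2"] by auto
    show "\<exists>N0. \<forall>N\<ge>N0. norm (av (?D N) - 0) < r"
    proof (intro exI allI impI)
      fix N
      assume "K \<le> N"
      then have "av (?D N) \<le> r / 2"
        using \<open>0 < r\<close> K by (intro av_sum_le) auto
      then show "norm (av (?D N) - 0) < r"
        using \<open>0 < r\<close> by (simp add: av_nonneg)
    qed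
  qed
  then show ?thesis
    unfolding av_lim_def by simp
qed

lemma av_sums_Cauchy_product:
  assumes a: "av_sums a A" and b: "av_sums b B"
  shows "av_sums (\<lambda>m. \<Sum>i\<le>m. a i * b (m - i)) (A * B)"
proof -
  let ?off = "\<lambda>N. {..<N} \<times> {..<N} - {(i, j). i + j < N}"
  have "(\<Sum>m<N. \<Sum>i\<le>m. a i * b (m - i)) =
      (\<Sum>k<N. a k) * (\<Sum>k<N. b k) - (\<Sum>(i, j) \<in> ?off N. a i * b j)" for N
  proof -
    have "(\<Sum>k<N. a k) * (\<Sum>k<N. b k) = (\<Sum>(i, j) \<in> {..<N} \<times> {..<N}. a i * b j)"
      by (simp add: sum_product sum.cartesian_product)
    also have "\<dots> =
        (\<Sum>(i, j) \<in> ?off N. a i * b j) + (\<Sum>(i, j) \<in> {(i, j). i + j < N}. a i * b j)"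
      by (rule sum.subset_diff) auto
    also have "(\<Sum>(i, j) \<in> {(i, j). i + j < N}. a i * b j) = (\<Sum>m<N. \<Sum>i\<le>m. a i * b (m - i))"
      by (rule sum.triangle_reindex)
    finally show ?thesis
      by simp
  qed
  with av_lim_diff[OF av_lim_mult[OF a b]
      av_lim_sum_off_triangle[OF av_sums_imp_lim_0[OF a] av_sums_imp_lim_0[OF b]]]
  show ?thesis
    by simp
qed

lemma av_sums_swap_triangular:
  fixes c :: "nat \<Rightarrow> nat \<Rightarrow> 'a"
  assumes R: "\<And>k. av_sums (c k) (R k)"
    and bound: "\<And>k m. av (c k m) \<le> \<rho> ^ m" and \<rho>: "0 \<le> \<rho>" "\<rho> < 1"
    and triangular: "\<And>k m. m < k \<Longrightarrow> c k m = 0"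
    and S: "av_sums (\<lambda>m. \<Sum>k\<le>m. c k m) S"
  shows "av_sums R S"
proof -
  define E where "E K = (\<Sum>k<K. R k - (\<Sum>m<K. c k m))" for K
  have "(\<Sum>m<K. \<Sum>k\<le>m. c k m) = (\<Sum>m<K. \<Sum>k<K. c k m)" for K
    by (intro sum.cong refl sum.mono_neutral_left) (auto simp: triangular)
  also have "\<dots> K = (\<Sum>k<K. \<Sum>m<K. c k m)" for K
    by (rule sum.swap)
  finally have split: "(\<Sum>k<K. R k) = (\<Sum>m<K. \<Sum>k\<le>m. c k m) + E K" for K
    unfolding E_def by (simp add: sum_subtractf)
  have "av (R k - (\<Sum>m<K. c k m)) \<le> \<rho> ^ K" for k K
  proof (rule av_sums_le[OF av_sums_shift[OF R]])
    show "av (c k (j + K)) \<le> \<rho> ^ K" for j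
      using bound[of k "j + K"] power_decreasing[of K "j + K" \<rho>] \<rho> by simp
  qed (use \<rho> in simp)
  then have "av (E K - 0) \<le> \<rho> ^ K" for K
    unfolding E_def using \<rho> by (simp add: av_sum_le)
  then have "av_lim av E 0"
    using \<rho> by (intro av_lim_by_bound[where b = "\<lambda>K. \<rho> ^ K"] always_eventually allI
        LIMSEQ_realpow_zero)
  from av_lim_add[OF S this] show ?thesis
    by (simp add: split)
qed

end

locale complete_ultrametric_abs = ultrametric_abs +
  assumes av_Cauchy_imp_lim:
    "(\<forall>e>0. \<exists>M. \<forall>m\<ge>M. \<forall>n\<ge>M. av (f m - f n) < e) \<Longrightarrow> \<exists>L. av_lim av f L"
begin

lemma av_sums_suminf:
  assumes "av_lim av f 0"
  shows "av_sums f (av_suminf av f)"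
proof -
  have "\<exists>s. av_sums f s"
  proof (rule av_Cauchy_imp_lim, intro allI impI)
    fix e :: real
    assume "0 < e"
    then obtain M where M: "\<And>k. M \<le> k \<Longrightarrow> av (f k) < e / 2"
      using order_tendstoD(2)[OF assms[unfolded av_lim_def], of "e / 2"]
      by (auto simp: eventually_sequentially)
    have partial: "av ((\<Sum>k<m. f k) - (\<Sum>k<n. f k)) < e" if "M \<le> n" "n \<le> m" for m n
    proof -
      have "(\<Sum>k<m. f k) - (\<Sum>k<n. f k) = (\<Sum>k\<in>{n..<m}. f k)"
        using that sum_diff_nat_ivl[of 0 n m f] by (simp add: atLeast0LessThan)
      moreover have "av (\<Sum>k\<in>{n..<m}. f k) \<le> e / 2"
        using M that \<open>0 < e\<close> by (intro av_sum_le) (auto intro: less_imp_le)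
      ultimately show ?thesis
        using \<open>0 < e\<close> by simp
    qed
    show "\<exists>M. \<forall>m\<ge>M. \<forall>n\<ge>M. av ((\<Sum>k<m. f k) - (\<Sum>k<n. f k)) < e"
    proof (intro exI allI impI)
      fix m n
      assume "M \<le> m" "M \<le> n"
      then show "av ((\<Sum>k<m. f k) - (\<Sum>k<n. f k)) < e"
        using partial[of n m] partial[of m n] av_minus_commute by (cases "n \<le> m") auto
    qed
  qed
  then show ?thesis
    using av_suminf_eqI by blast
qed

end

section \<open>The p-adic exponential\<close>

definition exp_radius :: "nat \<Rightarrow> real" where
  "exp_radius p = real p powr (- 1 / (real p - 1))"

locale padic_abs = complete_ultrametric_abs +
  fixes p :: nat
  assumes prime_p: "prime p"
    and av_of_int: "m \<noteq> 0 \<Longrightarrow> av (of_int m) = real p powr - real (multiplicity (int p) m)"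

lemma is_Cp_imp_padic_abs:
  assumes "is_Cp p av" and "prime p"
  shows "padic_abs av p"
  using assms by unfold_locales (auto simp: is_Cp_def)

context padic_abs
begin

abbreviation vp :: "nat \<Rightarrow> nat" where
  "vp n \<equiv> multiplicity (int p) (int n)"

lemma p_gt_1: "1 < p"
  using prime_p by (rule prime_gt_1_nat)

lemma prime_int_p: "prime (int p)"
  using prime_p by simp

lemma av_of_int_le_1: "av (of_int m) \<le> 1"
  using p_gt_1
  by (cases "m = 0") (simp_all add: av_of_int powr_minus inverse_le_1_iff ge_one_powr_ge_zero)

lemma av_of_nat_le_1: "av (of_nat n) \<le> 1"
  using av_of_int_le_1[of "int n"] by simp

lemma Zp_av_le_1: "x \<in> Zp av \<Longrightarrow> av x \<le> 1"
  unfolding Zp_def using av_lim_le av_of_int_le_1 by blast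

lemma av_of_int_eq_1: "\<not> int p dvd m \<Longrightarrow> av (of_int m) = 1"
  using p_gt_1 by (cases "m = 0") (simp_all add: av_of_int not_dvd_imp_multiplicity_0)

lemma av_2:
  assumes "odd p"
  shows "av 2 = 1"
proof -
  have "\<not> p dvd 2"
  proof
    assume "p dvd 2"
    then have "p = 2"
      using p_gt_1 dvd_imp_le[of p 2] by simp
    with assms show False
      by simp
  qed
  then have "\<not> int p dvd 2"
    by presburger
  then show ?thesis
    using av_of_int_eq_1[of 2] by simp
qed

lemma av_inverse_of_nat: "n \<noteq> 0 \<Longrightarrow> av (1 / of_nat n) = real p powr real (vp n)"
  using av_of_int[of "int n"] by (simp add: av_divide powr_minus_divide)

lemma av_of_nat_p: "av (of_nat p) = 1 / real p"
  using av_of_int[of "int p"] p_gt_1 by (simp add: multiplicity_self powr_minus_divide)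

lemma vp_mult: "a \<noteq> 0 \<Longrightarrow> b \<noteq> 0 \<Longrightarrow> vp (a * b) = vp a + vp b"
  using prime_elem_multiplicity_mult_distrib[of "int p" "int a" "int b"] prime_int_p by simp

lemma vp_p_times: "m \<noteq> 0 \<Longrightarrow> vp (p * m) = Suc (vp m)"
  using multiplicity_times_same[of "int m" "int p"] p_gt_1 by simp

lemma vp_fact: "vp (fact k) = k div p + vp (fact (k div p))"
proof (induction k)
  case (Suc k)
  have step: "vp (fact (Suc k)) = vp (Suc k) + vp (fact k)"
    using vp_mult[of "Suc k" "fact k"] by simp
  show ?case
  proof (cases "p dvd Suc k")
    case False
    then have "Suc k div p = k div p"
      by (simp add: div_Suc dvd_eq_mod_eq_0)
    moreover have "vp (Suc k) = 0"
      using False not_dvd_imp_multiplicity_0 of_nat_dvd_iff by blast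
    ultimately show ?thesis
      using Suc step by simp
  next
    case True
    then obtain m where m: "Suc k = p * m" ..
    then have "m \<noteq> 0"
      by (rule contrapos_pn) simp
    then obtain m' where m': "m = Suc m'"
      using not0_implies_Suc by blast
    have "Suc k div p = m" "k div p = m'"
      using m m' p_gt_1 True div_Suc[of k p] by (simp_all add: dvd_eq_mod_eq_0)
    moreover have "vp (fact m) = vp m + vp (fact m')"
      using vp_mult[of m "fact m'"] m' by simp
    ultimately show ?thesis
      using Suc step m m' vp_p_times[of m] by simp
  qed
qed simp

lemma vp_fact_le: "vp (fact k) * (p - 1) \<le> k"
proof (induction k rule: less_induct)
  case (less k)
  show ?case
  proof (cases "k = 0")
    case False
    then have IH: "vp (fact (k div p)) * (p - 1) \<le> k div p"
      using less p_gt_1 by simp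
    have "vp (fact k) * (p - 1) = k div p * (p - 1) + vp (fact (k div p)) * (p - 1)"
      unfolding vp_fact[of k] by (rule add_mult_distrib)
    also have "\<dots> \<le> k div p * (p - 1) + k div p"
      using IH by simp
    also have "\<dots> = k div p * p"
      using p_gt_1 by (cases p) (simp_all add: algebra_simps)
    also have "\<dots> \<le> k"
      by (rule div_times_less_eq_dividend)
    finally show ?thesis .
  qed simp
qed

lemma vp_le: "n \<noteq> 0 \<Longrightarrow> vp n * (p - 1) \<le> n - 1"
proof -
  assume "n \<noteq> 0"
  have "p ^ vp n dvd n"
    using multiplicity_dvd[of "int p" "int n"] by (simp flip: of_nat_power)
  then have "p ^ vp n \<le> n"
    using \<open>n \<noteq> 0\<close> by (simp add: dvd_imp_le)
  then have "real p ^ vp n \<le> real n"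
    unfolding of_nat_power[symmetric] of_nat_le_iff .
  moreover have "1 + real (vp n) * (real p - 1) \<le> real p ^ vp n"
    using Bernoulli_inequality[of "real p - 1" "vp n"] p_gt_1 by simp
  ultimately have "1 + real (vp n) * (real p - 1) \<le> real n"
    by linarith
  then have "real (vp n * (p - 1)) \<le> real (n - 1)"
    using p_gt_1 \<open>n \<noteq> 0\<close> by (simp add: of_nat_diff)
  then show ?thesis
    by (simp only: of_nat_le_iff)
qed

lemma exp_radius_pos: "0 < exp_radius p"
  using p_gt_1 by (simp add: exp_radius_def)

lemma powr_le_inverse_exp_radius_power:
  assumes "real v * (real p - 1) \<le> real k"
  shows "real p powr real v \<le> (1 / exp_radius p) ^ k"
proof -
  have "real v \<le> real k * (1 / (real p - 1))"
    using assms p_gt_1 by (simp add: field_simps)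
  then have "real p powr real v \<le> real p powr (real k * (1 / (real p - 1)))"
    using p_gt_1 by (intro powr_mono) simp_all
  also have "\<dots> = (real p powr (1 / (real p - 1))) ^ k"
    using p_gt_1 by (simp add: powr_power)
  also have "real p powr (1 / (real p - 1)) = 1 / exp_radius p"
    unfolding exp_radius_def by (simp add: powr_minus_divide flip: minus_divide_left)
  finally show ?thesis .
qed

lemma av_inverse_of_nat_le:
  assumes "n \<noteq> 0"
  shows "av (1 / of_nat n) \<le> (1 / exp_radius p) ^ (n - 1)"
proof -
  have "real (vp n * (p - 1)) \<le> real (n - 1)"
    using vp_le[OF assms] by (simp only: of_nat_le_iff)
  then have "real (vp n) * (real p - 1) \<le> real (n - 1)"
    using p_gt_1 by (simp add: of_nat_diff)
  then show ?thesis
    using av_inverse_of_nat[OF assms] by (simp add: powr_le_inverse_exp_radius_power)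
qed

lemma av_inverse_fact_le: "av (1 / fact k) \<le> (1 / exp_radius p) ^ k"
proof -
  have "real (vp (fact k) * (p - 1)) \<le> real k"
    using vp_fact_le[of k] by (simp only: of_nat_le_iff)
  then have "real (vp (fact k)) * (real p - 1) \<le> real k"
    using p_gt_1 by (simp add: of_nat_diff)
  then show ?thesis
    using av_inverse_of_nat[of "fact k"] by (simp add: powr_le_inverse_exp_radius_power)
qed

lemma av_exp_term_le: "av (z ^ k / fact k) \<le> (av z / exp_radius p) ^ k"
proof -
  have "av (z ^ k / fact k) = av z ^ k * av (1 / fact k)"
    by (simp add: av_divide av_power)
  also have "\<dots> \<le> av z ^ k * (1 / exp_radius p) ^ k"
    by (intro mult_left_mono av_inverse_fact_le) (simp add: av_nonneg)
  finally show ?thesis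
    by (simp add: power_divide)
qed

lemma p_exp_sums:
  assumes "av z < exp_radius p"
  shows "av_sums (\<lambda>k. z ^ k / fact k) (p_exp av z)"
proof -
  have "av_lim av (\<lambda>k. z ^ k / fact k) 0"
    using av_exp_term_le assms exp_radius_pos
    by (intro av_lim_by_bound[where b = "\<lambda>k. (av z / exp_radius p) ^ k"] always_eventually allI
        LIMSEQ_realpow_zero) (simp_all add: av_nonneg)
  then show ?thesis
    unfolding p_exp_def by (simp add: av_sums_suminf)
qed

lemma av_of_nat_mult_le: "av (of_nat k * z) \<le> av z"
  using av_of_nat_le_1[of k] by (simp add: av_mult av_nonneg mult_left_le_one_le)

lemma p_exp_add:
  assumes a: "av a < exp_radius p" and b: "av b < exp_radius p"
  shows "p_exp av (a + b) = p_exp av a * p_exp av b"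
proof -
  have "(\<Sum>i\<le>m. a ^ i / fact i * (b ^ (m - i) / fact (m - i))) = (a + b) ^ m / fact m" for m
  proof -
    have "(\<Sum>i\<le>m. a ^ i / fact i * (b ^ (m - i) / fact (m - i))) =
        (\<Sum>i\<le>m. of_nat (m choose i) * a ^ i * b ^ (m - i)) / fact m"
      by (simp add: sum_divide_distrib binomial_fact field_simps)
    then show ?thesis
      by (simp add: binomial_ring)
  qed
  then have "av_sums (\<lambda>m. (a + b) ^ m / fact m) (p_exp av a * p_exp av b)"
    using av_sums_Cauchy_product[OF p_exp_sums[OF a] p_exp_sums[OF b]] by simp
  with p_exp_sums[OF av_add_less[OF a b]] show ?thesis
    by (rule av_lim_unique)
qed

lemma p_exp_0 [simp]: "p_exp av 0 = 1"
proof -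
  have "av_sums (\<lambda>k. (0::'a) ^ k / fact k) (\<Sum>k<1. (0::'a) ^ k / fact k)"
    by (rule av_sums_finite) simp
  with p_exp_sums[of 0] show ?thesis
    using exp_radius_pos by (simp add: av_lim_unique)
qed

lemma p_exp_of_nat_mult:
  assumes "av z < exp_radius p"
  shows "p_exp av (of_nat k * z) = p_exp av z ^ k"
proof (induction k)
  case (Suc k)
  have "av (of_nat k * z) < exp_radius p"
    using av_of_nat_mult_le[of k z] assms by linarith
  then have "p_exp av (z + of_nat k * z) = p_exp av z * p_exp av (of_nat k * z)"
    using assms by (rule p_exp_add[rotated])
  then show ?case
    using Suc by (simp add: algebra_simps)
qed simp

lemma av_p_exp_minus_1_le:
  assumes "av z < exp_radius p"
  shows "av (p_exp av z - 1) \<le> av z / exp_radius p"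
proof -
  have "av_sums (\<lambda>k. z ^ Suc k / fact (Suc k)) (p_exp av z - 1)"
    using av_sums_Suc_shift[OF p_exp_sums[OF assms]] by simp
  then show ?thesis
  proof (rule av_sums_le)
    have "av (z ^ Suc k / fact (Suc k)) \<le> (av z / exp_radius p) ^ Suc k" for k
      by (rule av_exp_term_le)
    also have "(av z / exp_radius p) ^ Suc k \<le> av z / exp_radius p" for k
      using power_decreasing[of 1 "Suc k" "av z / exp_radius p"] assms exp_radius_pos
      by (simp add: av_nonneg)
    finally show "av (z ^ Suc k / fact (Suc k)) \<le> av z / exp_radius p" for k .
  qed (use exp_radius_pos in \<open>simp add: av_nonneg\<close>)
qed

end

section \<open>The p-adic logarithm and q-powers\<close>

lemma fps_mult_nth_scaled:
  fixes f g :: "'a::comm_ring_1 fps"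
  shows "(f * g) $ m * t ^ m = (\<Sum>i\<le>m. (f $ i * t ^ i) * (g $ (m - i) * t ^ (m - i)))"
proof -
  have "(f * g) $ m * t ^ m = (\<Sum>i\<le>m. f $ i * g $ (m - i) * t ^ m)"
    by (simp add: fps_mult_nth atLeast0AtMost sum_distrib_right)
  also have "\<dots> = (\<Sum>i\<le>m. (f $ i * t ^ i) * (g $ (m - i) * t ^ (m - i)))"
  proof (rule sum.cong)
    fix i
    assume "i \<in> {..m}"
    then have "t ^ m = t ^ i * t ^ (m - i)"
      by (simp flip: power_add)
    then show "f $ i * g $ (m - i) * t ^ m = (f $ i * t ^ i) * (g $ (m - i) * t ^ (m - i))"
      by (simp add: algebra_simps)
  qed simp
  finally show ?thesis .
qed

lemma fps_exp_compose_ln: "fps_exp (1::'a::field_char_0) oo fps_ln 1 = fps_X + 1"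
proof -
  have "(fps_exp (1::'a) - 1) oo fps_inv (fps_exp 1 - 1) = fps_X"
    by (rule fps_inv_right) simp_all
  then have "(fps_exp 1 oo fps_ln 1) - (1 oo fps_ln 1) = (fps_X :: 'a fps)"
    by (simp add: fps_ln_fps_exp_inv fps_compose_sub_distrib)
  then show ?thesis
    by (simp add: algebra_simps)
qed

lemma sum_alternating_geometric_odd:
  fixes z :: "'a::field"
  assumes "odd P" and "z \<noteq> - 1"
  shows "(\<Sum>y<P. (- z) ^ y) = (1 + z ^ P) / (1 + z)"
proof -
  have "- z \<noteq> 1"
    using assms(2) by (metis minus_minus)
  then show ?thesis
    using assms(1) by (simp add: sum_gp_strict)
qed

lemma qint_neg_odd: "odd P \<Longrightarrow> qint_neg q P = (1 + q ^ P) / (1 + q)"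
  by (simp add: qint_neg_def)

lemma (in ultrametric_abs) av_sums_exp_ln_columns:
  "av_sums (\<lambda>m. \<Sum>k\<le>m. 1 / fact k * ((fps_ln 1 ^ k) $ m * t ^ m)) (1 + t)"
proof -
  have "(\<Sum>k\<le>m. 1 / fact k * ((fps_ln 1 ^ k) $ m * t ^ m)) = (fps_exp 1 oo fps_ln 1) $ m * t ^ m" for m
    by (simp add: fps_compose_nth atLeast0AtMost sum_distrib_right)
  moreover have "av_sums (\<lambda>m. (fps_X + 1 :: 'a fps) $ m * t ^ m)
      (\<Sum>m<2. (fps_X + 1 :: 'a fps) $ m * t ^ m)"
    by (rule av_sums_finite) simp
  ultimately show ?thesis
    by (simp add: fps_exp_compose_ln numeral_2_eq_2 add.commute)
qed

locale padic_q = padic_abs +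
  fixes q :: 'a
  assumes av_q_minus_1_less: "av (q - 1) < exp_radius p"
begin

lemma av_ln_term_le:
  "av (fps_ln 1 $ m * (q - 1) ^ m) \<le> exp_radius p * (av (q - 1) / exp_radius p) ^ m"
proof (cases m)
  case 0
  then show ?thesis
    using exp_radius_pos by simp
next
  case (Suc m')
  have "av (fps_ln 1 $ m * (q - 1) ^ m) = av (1 / of_nat m) * av (q - 1) ^ m"
    using Suc by (simp add: fps_ln_nth av_mult av_divide av_power)
  also have "\<dots> \<le> (1 / exp_radius p) ^ m' * av (q - 1) ^ m"
    using av_inverse_of_nat_le[of m] Suc by (intro mult_right_mono) (simp_all add: av_nonneg)
  also have "\<dots> = exp_radius p * (av (q - 1) / exp_radius p) ^ m"
    using Suc exp_radius_pos by (simp add: power_divide field_simps)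
  finally show ?thesis .
qed

lemma p_log_sums: "av_sums (\<lambda>m. fps_ln 1 $ m * (q - 1) ^ m) (p_log av q)"
proof -
  have "av_lim av (\<lambda>m. fps_ln 1 $ m * (q - 1) ^ m) 0"
  proof (rule av_lim_by_bound)
    show "\<forall>\<^sub>F m in sequentially.
        av (fps_ln 1 $ m * (q - 1) ^ m - 0) \<le> exp_radius p * (av (q - 1) / exp_radius p) ^ m"
      using av_ln_term_le by simp
    show "(\<lambda>m. exp_radius p * (av (q - 1) / exp_radius p) ^ m) \<longlonglongrightarrow> 0"
      using av_q_minus_1_less exp_radius_pos
      by (intro tendsto_mult_right_zero LIMSEQ_realpow_zero) (simp_all add: av_nonneg)
  qed
  then have sums: "av_sums (\<lambda>m. fps_ln 1 $ m * (q - 1) ^ m)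
      (av_suminf av (\<lambda>m. fps_ln 1 $ m * (q - 1) ^ m))"
    by (rule av_sums_suminf)
  have terms: "(\<lambda>k. fps_ln 1 $ Suc k * (q - 1) ^ Suc k) =
      (\<lambda>k. (- 1) ^ k * (q - 1) ^ Suc k / of_nat (Suc k))"
    by (simp add: fps_ln_nth fun_eq_iff del: of_nat_Suc)
  have "av_sums (\<lambda>k. (- 1) ^ k * (q - 1) ^ Suc k / of_nat (Suc k))
      (av_suminf av (\<lambda>m. fps_ln 1 $ m * (q - 1) ^ m) - fps_ln 1 $ 0 * (q - 1) ^ 0)"
    using av_sums_Suc_shift[OF sums] unfolding terms .
  then have "av_sums (\<lambda>k. (- 1) ^ k * (q - 1) ^ Suc k / of_nat (Suc k))
      (av_suminf av (\<lambda>m. fps_ln 1 $ m * (q - 1) ^ m))"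
    by simp
  then have "p_log av q = av_suminf av (\<lambda>m. fps_ln 1 $ m * (q - 1) ^ m)"
    unfolding p_log_def by (rule av_suminf_eqI)
  with sums show ?thesis
    by simp
qed

lemma av_p_log_le: "av (p_log av q) \<le> av (q - 1)"
proof (rule av_sums_le[OF p_log_sums])
  show "av (fps_ln 1 $ m * (q - 1) ^ m) \<le> av (q - 1)" for m
  proof (cases "m = 0")
    case False
    have "(av (q - 1) / exp_radius p) ^ m \<le> av (q - 1) / exp_radius p"
      using False av_q_minus_1_less exp_radius_pos
      by (intro power_decreasing[of 1 m, simplified]) (simp_all add: av_nonneg)
    then have "exp_radius p * (av (q - 1) / exp_radius p) ^ m \<le> av (q - 1)"
      using exp_radius_pos mult_left_mono[of _ _ "exp_radius p"] by fastforce
    then show ?thesis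
      using av_ln_term_le[of m] by linarith
  qed (simp add: av_nonneg)
qed (simp add: av_nonneg)

lemma av_p_log_less: "av (p_log av q) < exp_radius p"
  using av_p_log_le av_q_minus_1_less by linarith

lemma av_ln_power_term_le:
  "av ((fps_ln 1 ^ k) $ m * (q - 1) ^ m) \<le> exp_radius p ^ k * (av (q - 1) / exp_radius p) ^ m"
proof (induction k arbitrary: m)
  case 0
  show ?case
    using exp_radius_pos by (simp add: av_nonneg)
next
  case (Suc k)
  let ?c = "av (q - 1) / exp_radius p"
  have "(fps_ln 1 ^ Suc k) $ m * (q - 1) ^ m =
      (\<Sum>i\<le>m. (fps_ln 1 $ i * (q - 1) ^ i) * ((fps_ln 1 ^ k) $ (m - i) * (q - 1) ^ (m - i)))"
    by (simp only: power_Suc fps_mult_nth_scaled)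
  also have "av \<dots> \<le> exp_radius p ^ Suc k * ?c ^ m"
  proof (rule av_sum_le)
    fix i
    assume "i \<in> {..m}"
    have "av ((fps_ln 1 $ i * (q - 1) ^ i) * ((fps_ln 1 ^ k) $ (m - i) * (q - 1) ^ (m - i)))
        = av (fps_ln 1 $ i * (q - 1) ^ i) * av ((fps_ln 1 ^ k) $ (m - i) * (q - 1) ^ (m - i))"
      by (rule av_mult)
    also have "\<dots> \<le> (exp_radius p * ?c ^ i) * (exp_radius p ^ k * ?c ^ (m - i))"
      using av_ln_term_le Suc.IH exp_radius_pos by (intro mult_mono) (simp_all add: av_nonneg)
    also have "\<dots> = exp_radius p ^ Suc k * ?c ^ m"
      using \<open>i \<in> {..m}\<close> by (simp add: algebra_simps flip: power_add)
    finally show "av ((fps_ln 1 $ i * (q - 1) ^ i) * ((fps_ln 1 ^ k) $ (m - i) * (q - 1) ^ (m - i)))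
        \<le> exp_radius p ^ Suc k * ?c ^ m" .
  qed (use exp_radius_pos in \<open>simp add: av_nonneg\<close>)
  finally show ?case .
qed

lemma p_log_power_sums: "av_sums (\<lambda>m. (fps_ln 1 ^ k) $ m * (q - 1) ^ m) (p_log av q ^ k)"
proof (induction k)
  case 0
  have "av_sums (\<lambda>m. (1 :: 'a fps) $ m * (q - 1) ^ m) (\<Sum>m<1. (1 :: 'a fps) $ m * (q - 1) ^ m)"
    by (rule av_sums_finite) simp
  then show ?case
    by simp
next
  case (Suc k)
  from av_sums_Cauchy_product[OF p_log_sums Suc.IH] show ?case
    unfolding power_Suc fps_mult_nth_scaled .
qed

lemma av_exp_ln_term_le:
  "av (1 / fact k * ((fps_ln 1 ^ k) $ m * (q - 1) ^ m)) \<le> (av (q - 1) / exp_radius p) ^ m"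
proof -
  have "av (1 / fact k * ((fps_ln 1 ^ k) $ m * (q - 1) ^ m)) =
      av (1 / fact k) * av ((fps_ln 1 ^ k) $ m * (q - 1) ^ m)"
    by (rule av_mult)
  also have "\<dots> \<le> (1 / exp_radius p) ^ k * (exp_radius p ^ k * (av (q - 1) / exp_radius p) ^ m)"
    using av_inverse_fact_le av_ln_power_term_le exp_radius_pos
    by (intro mult_mono) (simp_all add: av_nonneg)
  finally show ?thesis
    using exp_radius_pos by (simp add: power_one_over)
qed

lemma p_exp_p_log: "p_exp av (p_log av q) = q"
proof -
  \<comment> \<open>row k of the double series sums to (log q)^k / k!, and its columns sum to q\<close>
  define c where "c k m = 1 / fact k * ((fps_ln 1 ^ k) $ m * (q - 1) ^ m)" for k m
  have rows: "av_sums (c k) (1 / fact k * p_log av q ^ k)" for k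
    unfolding c_def by (rule av_sums_cmult[OF p_log_power_sums])
  have ratio: "0 \<le> av (q - 1) / exp_radius p" "av (q - 1) / exp_radius p < 1"
    using av_q_minus_1_less exp_radius_pos by (simp_all add: av_nonneg)
  have triangular: "c k m = 0" if "m < k" for k m
  proof -
    have "(fps_ln 1 ^ k) $ m = (0::'a)"
      using startsby_zero_power_prefix[of "fps_ln 1" k, rule_format, OF _ that] by simp
    then show ?thesis
      unfolding c_def by simp
  qed
  from av_sums_swap_triangular[OF rows av_exp_ln_term_le[folded c_def] ratio triangular
      av_sums_exp_ln_columns[of "q - 1", folded c_def]]
  have "av_sums (\<lambda>k. p_log av q ^ k / fact k) q"
    by simp
  with p_exp_sums[OF av_p_log_less] show ?thesis
    by (rule av_lim_unique)
qed

lemma q_power_eq_p_exp: "q ^ k = p_exp av (of_nat k * p_log av q)"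
  using p_exp_of_nat_mult[OF av_p_log_less, of k] by (simp add: p_exp_p_log)

lemma av_mult_p_log_less: "av z \<le> 1 \<Longrightarrow> av (z * p_log av q) < exp_radius p"
  using av_p_log_less mult_left_le_one_le[of "av (p_log av q)" "av z"]
  by (simp add: av_mult av_nonneg)

lemma qpow_of_nat: "qpow av q (of_nat k) = q ^ k"
  by (simp add: qpow_def q_power_eq_p_exp)

lemma qpow_add_of_nat:
  assumes "av x \<le> 1"
  shows "qpow av q (x + of_nat k) = qpow av q x * q ^ k"
  using p_exp_add[OF av_mult_p_log_less[OF assms] av_mult_p_log_less[OF av_of_nat_le_1]]
  by (simp add: qpow_def q_power_eq_p_exp distrib_right)

lemma qpow_mult_of_nat:
  assumes "av x \<le> 1"
  shows "qpow av q (x * of_nat k) = qpow av q x ^ k"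
  using p_exp_of_nat_mult[OF av_mult_p_log_less[OF assms]] by (simp add: qpow_def ac_simps)

lemma av_q_power_minus_1_le: "av (q ^ k - 1) \<le> av (of_nat k :: 'a) * (av (q - 1) / exp_radius p)"
proof -
  have "av (q ^ k - 1) \<le> av (of_nat k * p_log av q) / exp_radius p"
    unfolding q_power_eq_p_exp
    by (rule av_p_exp_minus_1_le[OF av_mult_p_log_less[OF av_of_nat_le_1]])
  also have "\<dots> \<le> av (of_nat k :: 'a) * (av (q - 1) / exp_radius p)"
    using av_p_log_le exp_radius_pos
    by (simp add: av_mult divide_right_mono mult_left_mono av_nonneg flip: times_divide_eq_right)
  finally show ?thesis .
qed

lemma q_power_neq_minus_1:
  assumes "odd p"
  shows "q ^ k \<noteq> - 1"
proof
  assume "q ^ k = - 1"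
  have "av (of_nat k :: 'a) * (av (q - 1) / exp_radius p) \<le> av (q - 1) / exp_radius p"
    using av_of_nat_le_1[of k] exp_radius_pos by (intro mult_left_le_one_le) (simp_all add: av_nonneg)
  moreover have "av (q - 1) / exp_radius p < 1"
    using av_q_minus_1_less exp_radius_pos by simp
  ultimately have "av (q ^ k - 1) < 1"
    using av_q_power_minus_1_le[of k] by linarith
  with \<open>q ^ k = - 1\<close> av_2[OF assms] show False
    by simp
qed

lemma av_lim_q_power_p_power: "av_lim av (\<lambda>N. q ^ (p ^ N)) 1"
proof (rule av_lim_by_bound)
  have "av (q ^ (p ^ N) - 1) \<le> (1 / real p) ^ N * (av (q - 1) / exp_radius p)" for N
    using av_q_power_minus_1_le[of "p ^ N"] by (simp add: av_power av_of_nat_p)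
  then show "\<forall>\<^sub>F N in sequentially.
      av (q ^ (p ^ N) - 1) \<le> (1 / real p) ^ N * (av (q - 1) / exp_radius p)"
    by simp
  show "(\<lambda>N. (1 / real p) ^ N * (av (q - 1) / exp_radius p)) \<longlonglongrightarrow> 0"
    using p_gt_1 by (intro tendsto_mult_left_zero LIMSEQ_realpow_zero) simp_all
qed

lemma qint_2: "q \<noteq> 1 \<Longrightarrow> qint av q 2 = 1 + q"
  using qpow_of_nat[of 2] by (simp add: qint_def power2_eq_square field_simps)

lemma qint_add_of_nat_power:
  assumes "av x \<le> 1"
  shows "qint av q (x + of_nat y) ^ n = (1 / (1 - q)) ^ n *
    (\<Sum>k\<le>n. of_nat (n choose k) * (- 1) ^ k * qpow av q (x * of_nat k) * (q ^ k) ^ y)"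
proof -
  have "qint av q (x + of_nat y) ^ n = (1 / (1 - q)) ^ n * (- (qpow av q x * q ^ y) + 1) ^ n"
    by (simp add: qint_def qpow_add_of_nat[OF assms] power_divide)
  also have "(- (qpow av q x * q ^ y) + 1) ^ n =
      (\<Sum>k\<le>n. of_nat (n choose k) * (- (qpow av q x * q ^ y)) ^ k)"
    using binomial_ring[of "- (qpow av q x * q ^ y)" 1 n] by simp
  also have "\<dots> = (\<Sum>k\<le>n. of_nat (n choose k) * (- 1) ^ k * qpow av q (x * of_nat k) * (q ^ k) ^ y)"
  proof -
    have "(- (qpow av q x * q ^ y)) ^ k = (- 1) ^ k * qpow av q (x * of_nat k) * (q ^ k) ^ y" for k
    proof -
      have "(q ^ y) ^ k = (q ^ k) ^ y"
        by (metis mult.commute power_mult)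
      then show ?thesis
        by (simp add: qpow_mult_of_nat[OF assms] power_minus[of "qpow av q x * q ^ y"] power_mult_distrib)
    qed
    then show ?thesis
      by (simp add: mult.assoc)
  qed
  finally show ?thesis .
qed

section \<open>The fermionic sums of [x + y]_q^n\<close>

lemma ferm_sum_qint_power:
  assumes "odd p" and "av x \<le> 1"
  shows "ferm_sum p q (\<lambda>y. qint av q (x + y) ^ n) N =
    (1 + q) / (1 + q ^ p ^ N) * ((1 / (1 - q)) ^ n *
      (\<Sum>k\<le>n. of_nat (n choose k) * (- 1) ^ k * qpow av q (x * of_nat k) *
        ((1 + (q ^ p ^ N) ^ (k + 1)) / (1 + q ^ (k + 1)))))"
proof -
  define C where "C k = of_nat (n choose k) * (- 1) ^ k * qpow av q (x * of_nat k)" for k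
  have "odd (p ^ N)"
    using assms(1) by simp
  have geometric: "(\<Sum>y<p ^ N. (q ^ k) ^ y * (- q) ^ y) =
      (1 + (q ^ p ^ N) ^ (k + 1)) / (1 + q ^ (k + 1))" for k
  proof -
    have "(\<Sum>y<p ^ N. (q ^ k) ^ y * (- q) ^ y) = (\<Sum>y<p ^ N. (- (q ^ (k + 1))) ^ y)"
      by (simp add: power_mult_distrib[symmetric] algebra_simps)
    also have "\<dots> = (1 + (q ^ (k + 1)) ^ p ^ N) / (1 + q ^ (k + 1))"
      by (rule sum_alternating_geometric_odd[OF \<open>odd (p ^ N)\<close> q_power_neq_minus_1[OF assms(1)]])
    also have "(q ^ (k + 1)) ^ p ^ N = (q ^ p ^ N) ^ (k + 1)"
      by (metis mult.commute power_mult)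
    finally show ?thesis .
  qed
  have "(\<Sum>y<p ^ N. qint av q (x + of_nat y) ^ n * (- q) ^ y) =
      (1 / (1 - q)) ^ n * (\<Sum>y<p ^ N. \<Sum>k\<le>n. C k * ((q ^ k) ^ y * (- q) ^ y))"
    by (simp add: qint_add_of_nat_power[OF assms(2)] C_def sum_distrib_left sum_distrib_right mult.assoc)
  also have "(\<Sum>y<p ^ N. \<Sum>k\<le>n. C k * ((q ^ k) ^ y * (- q) ^ y)) =
      (\<Sum>k\<le>n. \<Sum>y<p ^ N. C k * ((q ^ k) ^ y * (- q) ^ y))"
    by (rule sum.swap)
  also have "\<dots> = (\<Sum>k\<le>n. C k * ((1 + (q ^ p ^ N) ^ (k + 1)) / (1 + q ^ (k + 1))))"
    by (simp add: geometric flip: sum_distrib_left)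
  finally show ?thesis
    unfolding ferm_sum_def qint_neg_odd[OF \<open>odd (p ^ N)\<close>] C_def by simp
qed

lemma ferm_sum_qint_power_lim:
  assumes "odd p" and "q \<noteq> 1" and "av x \<le> 1"
  shows "av_lim av (\<lambda>N. ferm_sum p q (\<lambda>y. qint av q (x + y) ^ n) N)
    (qint av q 2 * (1 / (1 - q)) ^ n *
      (\<Sum>k\<le>n. of_nat (n choose k) * (- 1) ^ k * qpow av q (x * of_nat k) * (1 / (1 + q ^ (k + 1)))))"
proof -
  define C where "C k = of_nat (n choose k) * (- 1) ^ k * qpow av q (x * of_nat k)" for k
  define F where "F Q = (1 + q) / (1 + Q) * ((1 / (1 - q)) ^ n *
      (\<Sum>k\<le>n. C k * ((1 + Q ^ (k + 1)) / (1 + q ^ (k + 1)))))" for Q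
  have "1 + q ^ (k + 1) \<noteq> 0" for k
    using q_power_neq_minus_1[OF assms(1), of "k + 1"] by (auto simp: add_eq_0_iff)
  then have "av_lim av (\<lambda>N. F (q ^ p ^ N)) (F 1)"
    unfolding F_def using av_lim_q_power_p_power
    by (intro av_lim_mult av_lim_divide av_lim_add av_lim_sum av_lim_const av_lim_power) simp_all
  moreover have "F 1 = qint av q 2 * (1 / (1 - q)) ^ n *
      (\<Sum>k\<le>n. of_nat (n choose k) * (- 1) ^ k * qpow av q (x * of_nat k) * (1 / (1 + q ^ (k + 1))))"
    by (simp add: F_def C_def qint_2[OF assms(2)] sum_distrib_left mult_ac)
  moreover have "ferm_sum p q (\<lambda>y. qint av q (x + y) ^ n) N = F (q ^ p ^ N)" for N
    unfolding F_def C_def by (rule ferm_sum_qint_power[OF assms(1,3)])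
  ultimately show ?thesis
    by simp
qed

end

theorem mainTheorem1:
  fixes p :: nat and av :: "'a::field_char_0 \<Rightarrow> real" and q x :: 'a and n :: nat
  assumes "is_Cp p av" and "prime p" and "odd p"
    and "av (q - 1) < real p powr (- 1 / (real p - 1))" and "q \<noteq> 1"
    and "x \<in> Zp av"
  shows "av_lim av (\<lambda>N. ferm_sum p q (\<lambda>y. (qint av q (x + y)) ^ n) N)
           (qint av q 2 * (1 / (1 - q)) ^ n *
             (\<Sum>k\<le>n. of_nat (n choose k) * (-1) ^ k * qpow av q (x * of_nat k) * (1 / (1 + q ^ (k + 1)))))
       \<and> av_lim av (\<lambda>N. ferm_sum p q (\<lambda>y. (qint av q y) ^ n) N)
           (qint av q 2 * (1 / (1 - q)) ^ n *
             (\<Sum>l\<le>n. of_nat (n choose l) * (-1) ^ l * (1 / (1 + q ^ (l + 1)))))"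
proof -
  interpret padic_q av p q
    using is_Cp_imp_padic_abs[OF assms(1,2)] assms(4)
    by (simp add: padic_q_def padic_q_axioms_def exp_radius_def)
  have "av x \<le> 1"
    using assms(6) by (rule Zp_av_le_1)
  with ferm_sum_qint_power_lim[OF assms(3,5)] ferm_sum_qint_power_lim[OF assms(3,5), of 0]
  show ?thesis
    by (simp add: qpow_def)
qed

end
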